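(* Let $(X,d)$ be a complete metric space and let $\{T_i\}_{i\in\mathbb{N}}$ be a sequence of continuous maps $T_i:X\to X$ having a compact invariant domain $C\subseteq X$ (i.e. $T_i(x)\in C$ for all $x\in C$ and all $i\in\mathbb{N}$). Suppose $T_i$ converges uniformly on $C$ to a map $T$, where $T$ is a $\phi$-contraction with a comparison function $\phi$. Then for every $x\in C$ the forward trajectory $\Phi_k(x)=T_k\circ T_{k-1}\circ\cdots\circ T_1(x)$ converges to the fixed point $p$ of $T$, i.e. $\lim_{k\to\infty} d(\Phi_k(x),p)=0$.
   Context: A comparison function is a non-decreasing map $\phi:[0,\infty)\to[0,\infty)$ such that $\phi^p(t)\to 0$ as $p\to\infty$ for every $t\ge 0$, where $\phi^p$ denotes the $p$-fold composition of $\phi$. A map $T:X\to X$ is a $\phi$-contraction if $d(T(x),T(y))\le\phi(d(x,y))$ for all $x,y\in X$; such a map on a complete metric space has a unique fixed point. *)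

theory Defs
  imports "HOL-Analysis.Analysis"
begin

definition comparison_function :: "(real \<Rightarrow> real) \<Rightarrow> bool" where
  "comparison_function \<phi> \<longleftrightarrow>
     mono_on {0..} \<phi> \<and> (\<forall>t\<ge>0. \<phi> t \<ge> 0) \<and>
     (\<forall>t\<ge>0. (\<lambda>p. (\<phi> ^^ p) t) \<longlonglongrightarrow> 0)"

definition phi_contraction :: "(real \<Rightarrow> real) \<Rightarrow> ('a::metric_space \<Rightarrow> 'a) \<Rightarrow> bool" where
  "phi_contraction \<phi> T \<longleftrightarrow> (\<forall>x y. dist (T x) (T y) \<le> \<phi> (dist x y))"

fun traj :: "(nat \<Rightarrow> 'a \<Rightarrow> 'a) \<Rightarrow> nat \<Rightarrow> 'a \<Rightarrow> 'a" where
  "traj Ts 0 x = x"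
| "traj Ts (Suc k) x = Ts (Suc k) (traj Ts k x)"

end

theory Submission
  imports Defs
begin

text \<open>
  By the Matkowski fixed point theorem the \<phi>-contraction T has a fixed point p, and since
  \<phi> t < t for t > 0, T moves every point y \<noteq> p strictly closer to p. On the compact set
  of points of C at distance at least \<delta> from p this gain is bounded below by some \<eta> > 0.
  Once T_k is uniformly within \<eta>/2 of T on C, each step of the trajectory therefore
  either decreases the distance to p by \<eta>/2 or, if that distance is already below \<delta>,
  keeps it below \<delta> + \<eta>/2; so the trajectory eventually stays in a small ball around p.
\<close>

lemma comparison_function_funpow_nonneg:
  assumes "comparison_function \<phi>" and "t \<ge> 0"
  shows "(\<phi> ^^ n) t \<ge> 0"
  using assms by (induction n) (auto simp: comparison_function_def)

lemma comparison_function_less_self: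
  assumes comp: "comparison_function \<phi>" and t: "t > 0"
  shows "\<phi> t < t"
proof (rule ccontr)
  assume "\<not> \<phi> t < t"
  then have t_le: "t \<le> \<phi> t" by simp
  have mono: "mono_on {0..} \<phi>" and lim: "(\<lambda>n. (\<phi> ^^ n) t) \<longlonglongrightarrow> 0"
    using comp t unfolding comparison_function_def by auto
  have "t \<le> (\<phi> ^^ n) t" for n
  proof (induction n)
    case (Suc n)
    have "t \<le> \<phi> t" by (fact t_le)
    also have "\<phi> t \<le> \<phi> ((\<phi> ^^ n) t)"
      using Suc t by (intro mono_onD[OF mono]) auto
    finally show ?case by simp
  qed simp
  then have "t \<le> 0"
    by (intro tendsto_lowerbound[OF lim]) auto
  with t show False by simp
qed

lemma comparison_function_zero:
  assumes comp: "comparison_function \<phi>"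
  shows "\<phi> 0 = 0"
proof (rule ccontr)
  assume "\<phi> 0 \<noteq> 0"
  moreover have "\<phi> 0 \<ge> 0" using comp by (simp add: comparison_function_def)
  ultimately have pos: "\<phi> 0 > 0" by simp
  have "\<phi> 0 \<le> \<phi> (\<phi> 0)"
    using comp pos by (intro mono_onD[of "{0..}" \<phi>]) (auto simp: comparison_function_def)
  with comparison_function_less_self[OF comp pos] show False by simp
qed

lemma comparison_function_le_self:
  assumes "comparison_function \<phi>" and "t \<ge> 0"
  shows "\<phi> t \<le> t"
proof (cases "t = 0")
  case False
  with assms show ?thesis using comparison_function_less_self[of \<phi> t] by simp
qed (simp add: comparison_function_zero[OF assms(1)])

lemma phi_contraction_dist_le:
  assumes "comparison_function \<phi>" and "phi_contraction \<phi> T"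
  shows "dist (T x) (T y) \<le> dist x y"
proof -
  have "dist (T x) (T y) \<le> \<phi> (dist x y)"
    using assms(2) by (simp add: phi_contraction_def)
  also have "\<dots> \<le> dist x y"
    using assms(1) by (simp add: comparison_function_le_self)
  finally show ?thesis .
qed

lemma phi_contraction_continuous_on:
  assumes "comparison_function \<phi>" and "phi_contraction \<phi> T"
  shows "continuous_on S T"
proof -
  have "1-lipschitz_on S T"
    by (rule lipschitz_onI) (use phi_contraction_dist_le[OF assms] in auto)
  then show ?thesis by (rule lipschitz_on_continuous_on)
qed

lemma phi_contraction_dist_fixed_point_less:
  assumes "comparison_function \<phi>" and "phi_contraction \<phi> T" and "T p = p" and "y \<noteq> p"
  shows "dist (T y) p < dist y p"
proof -
  have "dist (T y) (T p) \<le> \<phi> (dist y p)"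
    using assms(2) by (simp add: phi_contraction_def)
  then have "dist (T y) p \<le> \<phi> (dist y p)"
    using assms(3) by simp
  also have "\<dots> < dist y p"
    using assms(4) by (simp add: comparison_function_less_self[OF assms(1)])
  finally show ?thesis .
qed

lemma phi_contraction_orbit_dist_Suc_tendsto_0:
  assumes comp: "comparison_function \<phi>" and contr: "phi_contraction \<phi> T"
  shows "(\<lambda>n. dist ((T ^^ n) x) ((T ^^ Suc n) x)) \<longlonglongrightarrow> 0"
proof -
  define D where "D n = dist ((T ^^ n) x) ((T ^^ Suc n) x)" for n
  have mono: "mono_on {0..} \<phi>"
    using comp by (simp add: comparison_function_def)
  have D_le: "D n \<le> (\<phi> ^^ n) (D 0)" for n
  proof (induction n)
    case (Suc n)
    have "D (Suc n) \<le> \<phi> (D n)"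
      using contr unfolding D_def phi_contraction_def by simp
    also have "\<dots> \<le> \<phi> ((\<phi> ^^ n) (D 0))"
      using Suc comparison_function_funpow_nonneg[OF comp, of "D 0" n]
      by (intro mono_onD[OF mono]) (auto simp: D_def)
    finally show ?case by simp
  qed simp
  have "(\<lambda>n. (\<phi> ^^ n) (D 0)) \<longlonglongrightarrow> 0"
    using comp by (simp add: comparison_function_def D_def)
  moreover have "norm (D n) \<le> (\<phi> ^^ n) (D 0)" for n
    using D_le[of n] by (simp add: D_def)
  ultimately have "D \<longlonglongrightarrow> 0"
    by (intro Lim_null_comparison[of D]) auto
  then show ?thesis unfolding D_def[abs_def] .
qed

lemma phi_contraction_orbit_Cauchy:
  assumes comp: "comparison_function \<phi>" and contr: "phi_contraction \<phi> T"
  shows "Cauchy (\<lambda>n. (T ^^ n) x)"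
  unfolding Cauchy_altdef2
proof (intro allI impI)
  fix e :: real
  assume "e > 0"
  define e' where "e' = e / 2"
  have e': "e' > 0" "e' < e" using \<open>e > 0\<close> by (auto simp: e'_def)
  have mono: "mono_on {0..} \<phi>"
    using comp by (simp add: comparison_function_def)
  have "e' - \<phi> e' > 0"
    using comparison_function_less_self[OF comp e'(1)] by simp
  then obtain N where "\<forall>n\<ge>N. norm (dist ((T ^^ n) x) ((T ^^ Suc n) x) - 0) < e' - \<phi> e'"
    using LIMSEQ_D[OF phi_contraction_orbit_dist_Suc_tendsto_0[OF comp contr]] by blast
  then have N: "dist ((T ^^ N) x) ((T ^^ Suc N) x) < e' - \<phi> e'"
    by simp
  \<comment> \<open>The orbit stays in the closed e'-ball around its N-th point, as \<phi> e' + d(x_N, x_{N+1}) \<le> e'.\<close>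
  have ball: "dist ((T ^^ n) x) ((T ^^ N) x) \<le> e'" if "n \<ge> N" for n
    using that
  proof (induction n rule: dec_induct)
    case (step n)
    have "dist ((T ^^ Suc n) x) ((T ^^ N) x)
        \<le> dist ((T ^^ Suc n) x) ((T ^^ Suc N) x) + dist ((T ^^ Suc N) x) ((T ^^ N) x)"
      by (rule dist_triangle)
    also have "\<dots> \<le> \<phi> (dist ((T ^^ n) x) ((T ^^ N) x)) + dist ((T ^^ N) x) ((T ^^ Suc N) x)"
      using contr by (simp add: phi_contraction_def dist_commute)
    also have "\<phi> (dist ((T ^^ n) x) ((T ^^ N) x)) \<le> \<phi> e'"
      using step e' by (intro mono_onD[OF mono]) auto
    finally show ?case using N by simp
  qed (use e' in simp)
  show "\<exists>N. \<forall>n\<ge>N. dist ((T ^^ n) x) ((T ^^ N) x) < e"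
    using le_less_trans[OF ball e'(2)] by blast
qed

theorem phi_contraction_has_fixed_point:
  fixes T :: "'a::complete_space \<Rightarrow> 'a"
  assumes comp: "comparison_function \<phi>" and contr: "phi_contraction \<phi> T"
  shows "\<exists>p. T p = p"
proof -
  fix x :: 'a
  obtain p where p: "(\<lambda>n. (T ^^ n) x) \<longlonglongrightarrow> p"
    using phi_contraction_orbit_Cauchy[OF comp contr] Cauchy_convergent_iff convergent_def
    by blast
  have "(\<lambda>n. T ((T ^^ n) x)) \<longlonglongrightarrow> T p"
    using phi_contraction_continuous_on[OF comp contr, of UNIV] p
    by (metis UNIV_I continuous_on_eq_continuous_at isCont_tendsto_compose open_UNIV)
  moreover have "(\<lambda>n. T ((T ^^ n) x)) \<longlonglongrightarrow> p"
    using LIMSEQ_Suc[OF p] by simp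
  ultimately have "T p = p" by (rule LIMSEQ_unique)
  then show ?thesis ..
qed

lemma compact_continuous_pos_bounded_below:
  fixes g :: "'a::topological_space \<Rightarrow> real"
  assumes "compact K" and "continuous_on K g" and "\<And>y. y \<in> K \<Longrightarrow> g y > 0"
  shows "\<exists>\<eta>>0. \<forall>y\<in>K. \<eta> \<le> g y"
proof (cases "K = {}")
  case False
  then obtain y0 where "y0 \<in> K" "\<And>y. y \<in> K \<Longrightarrow> g y0 \<le> g y"
    using continuous_attains_inf[OF assms(1) False assms(2)] by blast
  with assms(3) show ?thesis by blast
qed (auto intro: exI[of _ 1])

lemma eventually_le_of_stepwise_descent:
  fixes a :: "nat \<Rightarrow> real"
  assumes nonneg: "\<And>k. a k \<ge> 0" and "\<epsilon> > 0"
    and "eventually (\<lambda>k. a (Suc k) \<le> max (a k - \<epsilon>) b) sequentially"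
  shows "eventually (\<lambda>k. a k \<le> b) sequentially"
proof -
  obtain N where step_le: "\<And>k. k \<ge> N \<Longrightarrow> a (Suc k) \<le> max (a k - \<epsilon>) b"
    using assms(3) unfolding eventually_sequentially by blast
  have "\<exists>k\<ge>N. a k \<le> b"
  proof (rule ccontr)
    assume above: "\<not> (\<exists>k\<ge>N. a k \<le> b)"
    have descent: "a (N + j) \<le> a N - real j * \<epsilon>" for j
    proof (induction j)
      case (Suc j)
      have "\<not> a (Suc (N + j)) \<le> b"
        using above by simp
      then have "a (Suc (N + j)) \<le> a (N + j) - \<epsilon>"
        using step_le[of "N + j"] by (simp add: max_def split: if_splits)
      with Suc show ?case by (simp add: algebra_simps)
    qed simp
    obtain j :: nat where "a N / \<epsilon> < real j"
      using reals_Archimedean2 by blast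
    then have "a N < real j * \<epsilon>"
      using \<open>\<epsilon> > 0\<close> by (simp add: field_simps)
    with descent[of j] nonneg[of "N + j"] show False by linarith
  qed
  then obtain k0 where "k0 \<ge> N" "a k0 \<le> b" by blast
  have "a k \<le> b" if "k \<ge> k0" for k
    using that
  proof (induction k rule: dec_induct)
    case (step k)
    then have "a (Suc k) \<le> max (a k - \<epsilon>) b"
      using \<open>k0 \<ge> N\<close> by (intro step_le) simp
    with step.IH \<open>\<epsilon> > 0\<close> show ?case by simp
  qed (fact \<open>a k0 \<le> b\<close>)
  then show ?thesis
    unfolding eventually_sequentially by blast
qed

lemma traj_in_invariant:
  assumes "\<And>i x. x \<in> C \<Longrightarrow> Ts i x \<in> C" and "x \<in> C"
  shows "traj Ts k x \<in> C"
  using assms by (induction k) auto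

theorem traj_tendsto_attracting_fixed_point:
  fixes Ts :: "nat \<Rightarrow> 'a::metric_space \<Rightarrow> 'a"
  assumes compC: "compact C"
    and inv: "\<And>i x. x \<in> C \<Longrightarrow> Ts i x \<in> C"
    and unif: "uniform_limit C Ts T sequentially"
    and contT: "continuous_on C T"
    and Tp: "T p = p"
    and attract: "\<And>y. y \<in> C \<Longrightarrow> y \<noteq> p \<Longrightarrow> dist (T y) p < dist y p"
    and x: "x \<in> C"
  shows "(\<lambda>k. traj Ts k x) \<longlonglongrightarrow> p"
proof (rule metric_LIMSEQ_I)
  fix e :: real
  assume "e > 0"
  define \<delta> where "\<delta> = e / 2"
  define a where "a k = dist (traj Ts k x) p" for k
  define K where "K = C \<inter> {y. \<delta> \<le> dist y p}"
  have "\<delta> > 0" using \<open>e > 0\<close> by (simp add: \<delta>_def)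
  have compK: "compact K"
    unfolding K_def using compC
    by (intro compact_Int_closed closed_Collect_le continuous_intros) auto
  have cont_gain: "continuous_on K (\<lambda>y. dist y p - dist (T y) p)"
    using contT unfolding K_def by (intro continuous_intros) (auto intro: continuous_on_subset)
  have pos_gain: "dist y p - dist (T y) p > 0" if "y \<in> K" for y
  proof -
    have "y \<in> C" "y \<noteq> p"
      using that \<open>\<delta> > 0\<close> by (auto simp: K_def)
    then show ?thesis using attract by simp
  qed
  obtain \<eta> where "\<eta> > 0" and gain: "\<And>y. y \<in> K \<Longrightarrow> \<eta> \<le> dist y p - dist (T y) p"
    using compact_continuous_pos_bounded_below[OF compK cont_gain pos_gain] by blast
  define \<epsilon> where "\<epsilon> = min \<eta> \<delta> / 2"
  have "\<epsilon> > 0" using \<open>\<eta> > 0\<close> \<open>\<delta> > 0\<close> by (simp add: \<epsilon>_def)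
  obtain N where close: "\<And>n y. n \<ge> N \<Longrightarrow> y \<in> C \<Longrightarrow> dist (Ts n y) (T y) < \<epsilon>"
    using uniform_limitD[OF unif \<open>\<epsilon> > 0\<close>] unfolding eventually_sequentially by blast
  have "a (Suc k) \<le> max (a k - \<epsilon>) (\<delta> + \<epsilon>)" if "k \<ge> N" for k
  proof -
    define y where "y = traj Ts k x"
    have "y \<in> C" unfolding y_def using inv x by (rule traj_in_invariant)
    have ak: "a k = dist y p" by (simp add: a_def y_def)
    have "a (Suc k) \<le> dist (Ts (Suc k) y) (T y) + dist (T y) p"
      unfolding a_def y_def by (simp add: dist_triangle)
    also have "\<dots> < \<epsilon> + dist (T y) p"
      using close \<open>k \<ge> N\<close> \<open>y \<in> C\<close> by simp
    also have "\<dots> \<le> max (a k - \<epsilon>) (\<delta> + \<epsilon>)"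
    proof (cases "\<delta> \<le> a k")
      case True
      then have "y \<in> K"
        using \<open>y \<in> C\<close> unfolding K_def ak by simp
      then have "\<eta> \<le> a k - dist (T y) p"
        unfolding ak by (rule gain)
      then show ?thesis unfolding \<epsilon>_def by linarith
    next
      case False
      moreover have "dist (T y) p \<le> a k"
        using attract[OF \<open>y \<in> C\<close>] Tp unfolding ak by (cases "y = p") auto
      ultimately show ?thesis by linarith
    qed
    finally show ?thesis by simp
  qed
  then have "eventually (\<lambda>k. a k \<le> \<delta> + \<epsilon>) sequentially"
    using \<open>\<epsilon> > 0\<close> unfolding a_def
    by (intro eventually_le_of_stepwise_descent) (auto simp: eventually_sequentially)
  then obtain M where "\<And>k. k \<ge> M \<Longrightarrow> a k \<le> \<delta> + \<epsilon>"
    unfolding eventually_sequentially by blast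
  moreover have "\<delta> + \<epsilon> < e"
    using \<open>e > 0\<close> unfolding \<epsilon>_def \<delta>_def by linarith
  ultimately show "\<exists>M. \<forall>k\<ge>M. dist (traj Ts k x) p < e"
    unfolding a_def by force
qed

theorem proposition3p10:
  fixes Ts :: "nat \<Rightarrow> 'a::complete_space \<Rightarrow> 'a"
    and T :: "'a \<Rightarrow> 'a" and C :: "'a set" and \<phi> :: "real \<Rightarrow> real"
  assumes cont: "\<And>i. continuous_on UNIV (Ts i)"
    and compC: "compact C"
    and inv: "\<And>i x. x \<in> C \<Longrightarrow> Ts i x \<in> C"
    and unif: "uniform_limit C Ts T sequentially"
    and comp: "comparison_function \<phi>"
    and contr: "phi_contraction \<phi> T"
  shows "\<exists>p. T p = p \<and> (\<forall>x\<in>C. ((\<lambda>k. dist (traj Ts k x) p) \<longlonglongrightarrow> 0))"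
proof -
  obtain p where Tp: "T p = p"
    using phi_contraction_has_fixed_point[OF comp contr] by blast
  have attract: "dist (T y) p < dist y p" if "y \<noteq> p" for y
    using phi_contraction_dist_fixed_point_less[OF comp contr Tp that] .
  have "(\<lambda>k. traj Ts k x) \<longlonglongrightarrow> p" if "x \<in> C" for x
    using compC inv unif phi_contraction_continuous_on[OF comp contr] Tp attract that
    by (rule traj_tendsto_attracting_fixed_point)
  then have "(\<lambda>k. dist (traj Ts k x) p) \<longlonglongrightarrow> 0" if "x \<in> C" for x
    using that by (intro tendsto_dist_iff[THEN iffD1])
  with Tp show ?thesis by blast
qed

end
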